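(* Let $G$ be a locally nilpotent profinite group. Then there exist a positive integer $n$, elements $g_1,g_2\in G$ and an open subgroup $H\leq G$ such that $[g_1h_1,{}_n\,g_2h_2]=1$ for all $h_1,h_2\in H$.
   Context: For elements $x,y$ of a group, $[x,{}_0y]=x$ and $[x,{}_ny]=[[x,{}_{n-1}y],y]$ for $n\geq1$, where $[u,v]=u^{-1}v^{-1}uv$. A group is locally nilpotent if every finitely generated subgroup is nilpotent. *)

theory Defs
  imports "HOL-Analysis.Analysis" "HOL-Algebra.Algebra"
begin

definition gcomm :: "('a, 'b) monoid_scheme \<Rightarrow> 'a \<Rightarrow> 'a \<Rightarrow> 'a" where
  "gcomm G u v = inv\<^bsub>G\<^esub> u \<otimes>\<^bsub>G\<^esub> inv\<^bsub>G\<^esub> v \<otimes>\<^bsub>G\<^esub> u \<otimes>\<^bsub>G\<^esub> v"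

primrec iter_comm :: "('a, 'b) monoid_scheme \<Rightarrow> 'a \<Rightarrow> 'a \<Rightarrow> nat \<Rightarrow> 'a" where
  "iter_comm G x y 0 = x"
| "iter_comm G x y (Suc n) = gcomm G (iter_comm G x y n) y"

primrec lower_central :: "('a, 'b) monoid_scheme \<Rightarrow> 'a set \<Rightarrow> nat \<Rightarrow> 'a set" where
  "lower_central G H 0 = H"
| "lower_central G H (Suc i) =
     generate G {gcomm G x y | x y. x \<in> lower_central G H i \<and> y \<in> H}"

definition nilpotent_subgroup :: "('a, 'b) monoid_scheme \<Rightarrow> 'a set \<Rightarrow> bool" where
  "nilpotent_subgroup G H \<longleftrightarrow> (\<exists>c. lower_central G H c = {\<one>\<^bsub>G\<^esub>})"

definition locally_nilpotent :: "('a, 'b) monoid_scheme \<Rightarrow> bool" where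
  "locally_nilpotent G \<longleftrightarrow>
     (\<forall>S. finite S \<and> S \<subseteq> carrier G \<longrightarrow> nilpotent_subgroup G (generate G S))"

definition topological_group :: "('a, 'b) monoid_scheme \<Rightarrow> 'a topology \<Rightarrow> bool" where
  "topological_group G T \<longleftrightarrow> group G \<and> topspace T = carrier G \<and>
     continuous_map (prod_topology T T) T (\<lambda>(x, y). x \<otimes>\<^bsub>G\<^esub> y) \<and>
     continuous_map T T (\<lambda>x. inv\<^bsub>G\<^esub> x)"

definition totally_disconnected_space :: "'a topology \<Rightarrow> bool" where
  "totally_disconnected_space T \<longleftrightarrow>
     (\<forall>x \<in> topspace T. connected_component_of_set T x = {x})"

definition profinite_group :: "('a, 'b) monoid_scheme \<Rightarrow> 'a topology \<Rightarrow> bool" where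
  "profinite_group G T \<longleftrightarrow> topological_group G T \<and> compact_space T \<and>
     Hausdorff_space T \<and> totally_disconnected_space T"

end

theory Submission
  imports Defs
begin

text \<open>Every pair of elements of a locally nilpotent group is Engel, so the closed sets
  \<open>E\<^sub>n = {(x, y). [x,\<^sub>n y] = 1}\<close> cover the compact Hausdorff space \<open>G \<times> G\<close>. By the Baire
  category theorem some \<open>E\<^sub>n\<close> contains a product \<open>U\<^sub>1 \<times> U\<^sub>2\<close> of open sets around a point
  \<open>(g\<^sub>1, g\<^sub>2)\<close>. Since the open subgroups form a neighbourhood base of the identity in a
  profinite group, some open subgroup \<open>H\<close> satisfies \<open>g\<^sub>1H \<subseteq> U\<^sub>1\<close> and \<open>g\<^sub>2H \<subseteq> U\<^sub>2\<close>.\<close>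

lemma locally_compact_totally_disconnected_clopen_nbhd:
  assumes "locally_compact_space T" "Hausdorff_space T" "totally_disconnected_space T"
    and W: "openin T W" "x \<in> W"
  obtains C where "closedin T C" "openin T C" "x \<in> C" "C \<subseteq> W"
proof -
  have x: "x \<in> topspace T"
    using W openin_subset by blast
  then have "{x} \<in> connected_components_of T"
    using assms(3) connected_component_in_connected_components_of
    unfolding totally_disconnected_space_def by metis
  moreover have "compactin T {x}"
    using x by simp
  ultimately obtain U V where UV: "openin T U" "openin T V" "disjnt U V" "U \<union> V = topspace T"
    and "{x} \<subseteq> U" "U \<subseteq> W"
    using wilder_locally_compact_component_thm[OF assms(1,2)] W by (metis empty_subsetI insert_subset)
  have "U = topspace T - V"
    using UV by (auto simp: disjnt_def)
  then have "closedin T U"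
    using UV(2) by blast
  with UV(1) \<open>{x} \<subseteq> U\<close> \<open>U \<subseteq> W\<close> show thesis
    using that by blast
qed

lemma Baire_countable_closed_cover:
  assumes "locally_compact_space T" "Hausdorff_space T" "topspace T \<noteq> {}"
    and "\<And>n::nat. closedin T (E n)" "\<Union>(range E) = topspace T"
  obtains n where "T interior_of E n \<noteq> {}"
proof (rule ccontr)
  assume "\<not> thesis"
  then have "\<And>S. S \<in> range E \<Longrightarrow> closedin T S \<and> T interior_of S = {}"
    using assms(4) that by blast
  moreover have "regular_space T"
    using assms(1,2) locally_compact_Hausdorff_imp_regular_space by blast
  ultimately have "T interior_of \<Union>(range E) = {}"
    using assms(1) by (intro Baire_category_alt) auto
  then show False
    using assms(3,5) by simp
qed

lemma continuous_map_group_mult: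
  assumes "topological_group G T" "continuous_map Y T f" "continuous_map Y T g"
  shows "continuous_map Y T (\<lambda>z. f z \<otimes>\<^bsub>G\<^esub> g z)"
  using continuous_map_compose[OF continuous_map_pairedI[OF assms(2,3)],
      of T "\<lambda>(x, y). x \<otimes>\<^bsub>G\<^esub> y"] assms(1)
  by (simp add: topological_group_def o_def)

lemma continuous_map_group_inv:
  assumes "topological_group G T" "continuous_map Y T f"
  shows "continuous_map Y T (\<lambda>z. inv\<^bsub>G\<^esub> f z)"
  using continuous_map_compose[OF assms(2), of T "\<lambda>x. inv\<^bsub>G\<^esub> x"] assms(1)
  by (simp add: topological_group_def o_def)

lemma continuous_map_group_lmult:
  assumes "topological_group G T" "a \<in> carrier G"
  shows "continuous_map T T (\<lambda>x. a \<otimes>\<^bsub>G\<^esub> x)"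
  using continuous_map_group_mult[OF assms(1) _ continuous_map_id, of "\<lambda>x. a"] assms
  by (simp add: topological_group_def)

lemma continuous_map_iter_comm:
  assumes "topological_group G T" "continuous_map Y T f" "continuous_map Y T g"
  shows "continuous_map Y T (\<lambda>z. iter_comm G (f z) (g z) n)"
proof (induction n)
  case 0
  show ?case using assms(2) by simp
next
  case (Suc n)
  then show ?case
    unfolding iter_comm.simps gcomm_def
    by (intro continuous_map_group_mult continuous_map_group_inv assms)
qed

lemma closedin_iter_comm_eq_one:
  assumes "topological_group G T" "Hausdorff_space T"
  shows "closedin (prod_topology T T)
           {(x, y) \<in> carrier G \<times> carrier G. iter_comm G x y n = \<one>\<^bsub>G\<^esub>}"
proof -
  have top: "topspace T = carrier G" and "group G"
    using assms(1) by (auto simp: topological_group_def)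
  have "continuous_map (prod_topology T T) T (\<lambda>z. iter_comm G (fst z) (snd z) n)"
    using assms(1) by (intro continuous_map_iter_comm continuous_map_fst continuous_map_snd)
  moreover have "closedin T {\<one>\<^bsub>G\<^esub>}"
    using assms(2) top \<open>group G\<close> by (simp add: closedin_Hausdorff_singleton group.is_monoid)
  ultimately have "closedin (prod_topology T T)
      {z \<in> topspace (prod_topology T T). iter_comm G (fst z) (snd z) n \<in> {\<one>\<^bsub>G\<^esub>}}"
    by (rule closedin_continuous_map_preimage)
  then show ?thesis
    by (simp add: top case_prod_unfold Collect_conj_eq mem_Times_iff)
qed

lemma iter_comm_in_lower_central:
  assumes "x \<in> H" "y \<in> H"
  shows "iter_comm G x y k \<in> lower_central G H k"
proof (induction k)
  case 0
  show ?case using assms by simp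
next
  case (Suc k)
  then show ?case using assms(2) by (auto intro!: generate.incl)
qed

lemma locally_nilpotent_Engel:
  assumes "group G" "locally_nilpotent G" "x \<in> carrier G" "y \<in> carrier G"
  obtains n where "iter_comm G x y (Suc n) = \<one>\<^bsub>G\<^esub>"
proof -
  interpret group G by (fact assms(1))
  define H where "H = generate G {x, y}"
  have "nilpotent_subgroup G H"
    using assms(2-4) unfolding locally_nilpotent_def H_def by simp
  then obtain c where c: "lower_central G H c = {\<one>\<^bsub>G\<^esub>}"
    unfolding nilpotent_subgroup_def by blast
  have "x \<in> H" "y \<in> H"
    unfolding H_def by (auto intro: generate.incl)
  then have "iter_comm G x y c = \<one>\<^bsub>G\<^esub>"
    using iter_comm_in_lower_central[of x H y G c] c by simp
  then have "iter_comm G x y (Suc c) = \<one>\<^bsub>G\<^esub>"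
    using assms(4) by (simp add: gcomm_def)
  then show thesis by (fact that)
qed

lemma (in group) generate_subset_right_stable:
  assumes "C \<subseteq> carrier G" "\<one> \<in> C" "W \<subseteq> carrier G"
    and stable: "\<And>c w. c \<in> C \<Longrightarrow> w \<in> W \<Longrightarrow> c \<otimes> w \<in> C \<and> c \<otimes> inv w \<in> C"
  shows "generate G W \<subseteq> C"
proof
  fix h assume h: "h \<in> generate G W"
  have "\<forall>c\<in>C. c \<otimes> h \<in> C"
    using h
  proof (induction h rule: generate.induct)
    case one
    show ?case using assms(1) by auto
  next
    case (incl w)
    then show ?case using stable by blast
  next
    case (inv w)
    then show ?case using stable by blast
  next
    case (eng h1 h2)
    have "h1 \<in> carrier G" "h2 \<in> carrier G"
      using eng.hyps generate_incl[OF assms(3)] by auto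
    then show ?case
      using eng.IH assms(1) by (auto simp: m_assoc[symmetric])
  qed
  moreover have "h \<in> carrier G"
    using h generate_incl[OF assms(3)] by blast
  ultimately show "h \<in> C"
    using assms(2) by force
qed

lemma openin_generate:
  assumes tg: "topological_group G T" and W: "openin T W" "\<one>\<^bsub>G\<^esub> \<in> W"
  shows "openin T (generate G W)"
proof -
  have grp: "group G" and top: "topspace T = carrier G"
    using tg by (auto simp: topological_group_def)
  have Wc: "W \<subseteq> carrier G"
    using W(1) openin_subset top by blast
  show ?thesis
  proof (subst openin_subopen, intro ballI)
    fix h assume h: "h \<in> generate G W"
    have hc: "h \<in> carrier G" "inv\<^bsub>G\<^esub> h \<in> carrier G"
      using h group.generate_incl[OF grp Wc] grp by auto
    define U where "U = {x \<in> topspace T. inv\<^bsub>G\<^esub> h \<otimes>\<^bsub>G\<^esub> x \<in> W}"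
    have "openin T U"
      unfolding U_def
      by (rule openin_continuous_map_preimage[OF continuous_map_group_lmult[OF tg hc(2)] W(1)])
    moreover have "h \<in> U"
      using hc top W(2) grp by (simp add: U_def group.l_inv)
    moreover have "U \<subseteq> generate G W"
    proof
      fix x assume "x \<in> U"
      then have x: "x \<in> carrier G" and "inv\<^bsub>G\<^esub> h \<otimes>\<^bsub>G\<^esub> x \<in> generate G W"
        using top generate.incl[of _ W G] by (auto simp: U_def)
      then have "h \<otimes>\<^bsub>G\<^esub> (inv\<^bsub>G\<^esub> h \<otimes>\<^bsub>G\<^esub> x) \<in> generate G W"
        using subgroup.m_closed[OF group.generate_is_subgroup[OF grp Wc] h] by blast
      moreover have "h \<otimes>\<^bsub>G\<^esub> (inv\<^bsub>G\<^esub> h \<otimes>\<^bsub>G\<^esub> x) = x"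
        using hc x grp by (simp add: group.is_monoid monoid.m_assoc[symmetric] group.r_inv)
      ultimately show "x \<in> generate G W"
        by simp
    qed
    ultimately show "\<exists>U. openin T U \<and> h \<in> U \<and> U \<subseteq> generate G W"
      by blast
  qed
qed

text \<open>Tube lemma: finitely many boxes \<open>A \<times> V\<close> with \<open>1 \<in> V\<close> and \<open>AV \<subseteq> C\<close> cover \<open>C \<times> {1}\<close>;
  intersect their \<open>V\<close>s.\<close>
lemma compactin_openin_mult_stable_nbhd:
  assumes tg: "topological_group G T" and C: "compactin T C" "openin T C"
  obtains V where "openin T V" "\<one>\<^bsub>G\<^esub> \<in> V"
    "\<And>c v. c \<in> C \<Longrightarrow> v \<in> V \<Longrightarrow> c \<otimes>\<^bsub>G\<^esub> v \<in> C"
proof -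
  have grp: "group G" and top: "topspace T = carrier G"
    and mult: "continuous_map (prod_topology T T) T (\<lambda>(x, y). x \<otimes>\<^bsub>G\<^esub> y)"
    using tg by (auto simp: topological_group_def)
  define P where "P = {z \<in> topspace (prod_topology T T). (\<lambda>(x, y). x \<otimes>\<^bsub>G\<^esub> y) z \<in> C}"
  have "openin (prod_topology T T) P"
    unfolding P_def by (rule openin_continuous_map_preimage[OF mult C(2)])
  moreover have "(c, \<one>\<^bsub>G\<^esub>) \<in> P" if "c \<in> C" for c
    using that openin_subset[OF C(2)] grp top by (auto simp: P_def group.is_monoid)
  ultimately have "\<exists>A V. openin T A \<and> openin T V \<and> c \<in> A \<and> \<one>\<^bsub>G\<^esub> \<in> V \<and> A \<times> V \<subseteq> P"
    if "c \<in> C" for c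
    using that unfolding openin_prod_topology_alt by blast
  then obtain A V where AV: "\<And>c. c \<in> C \<Longrightarrow>
      openin T (A c) \<and> openin T (V c) \<and> c \<in> A c \<and> \<one>\<^bsub>G\<^esub> \<in> V c \<and> A c \<times> V c \<subseteq> P"
    by metis
  have "\<forall>U\<in>A ` C. openin T U" "C \<subseteq> \<Union>(A ` C)"
    using AV by auto
  then obtain \<F> where "finite \<F>" "\<F> \<subseteq> A ` C" "C \<subseteq> \<Union>\<F>"
    using C(1) unfolding compactin_def by meson
  then obtain K where K: "finite K" "K \<subseteq> C" "C \<subseteq> \<Union>(A ` K)"
    by (metis finite_subset_image)
  have VK: "\<And>k. k \<in> K \<Longrightarrow> openin T (V k) \<and> \<one>\<^bsub>G\<^esub> \<in> V k"
    using K(2) AV by blast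
  define V0 where "V0 = \<Inter>(insert (topspace T) (V ` K))"
  show thesis
  proof
    show "openin T V0"
      unfolding V0_def using K(1) VK by (intro openin_Inter) auto
    show "\<one>\<^bsub>G\<^esub> \<in> V0"
      unfolding V0_def using VK top grp by (auto simp: group.is_monoid)
    fix c v assume "c \<in> C" "v \<in> V0"
    then obtain k where k: "k \<in> K" "c \<in> A k"
      using K(3) by blast
    then have "(c, v) \<in> A k \<times> V k"
      using \<open>v \<in> V0\<close> unfolding V0_def by blast
    moreover have "A k \<times> V k \<subseteq> P"
      using AV K(2) k(1) by blast
    ultimately show "c \<otimes>\<^bsub>G\<^esub> v \<in> C"
      by (auto simp: P_def)
  qed
qed

lemma open_subgroup_in_compact_open:
  assumes tg: "topological_group G T" and C: "compactin T C" "openin T C" "\<one>\<^bsub>G\<^esub> \<in> C"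
  obtains H where "subgroup H G" "openin T H" "H \<subseteq> C"
proof -
  have grp: "group G" and top: "topspace T = carrier G"
    and inv: "continuous_map T T (\<lambda>x. inv\<^bsub>G\<^esub> x)"
    using tg by (auto simp: topological_group_def)
  obtain V where V: "openin T V" "\<one>\<^bsub>G\<^esub> \<in> V"
    "\<And>c v. c \<in> C \<Longrightarrow> v \<in> V \<Longrightarrow> c \<otimes>\<^bsub>G\<^esub> v \<in> C"
    using compactin_openin_mult_stable_nbhd[OF tg C(1,2)] by blast
  define W where "W = {v \<in> V. inv\<^bsub>G\<^esub> v \<in> V}"
  have "W = V \<inter> {x \<in> topspace T. inv\<^bsub>G\<^esub> x \<in> V}"
    using openin_subset[OF V(1)] by (auto simp: W_def)
  then have W: "openin T W"
    using openin_continuous_map_preimage[OF inv V(1)] V(1) by auto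
  have Wc: "W \<subseteq> carrier G"
    using openin_subset[OF W] top by simp
  have "\<one>\<^bsub>G\<^esub> \<in> W"
    using V(2) grp by (simp add: W_def group.is_monoid monoid.inv_one)
  show thesis
  proof
    show "subgroup (generate G W) G"
      using grp Wc by (simp add: group.generate_is_subgroup)
    show "openin T (generate G W)"
      by (rule openin_generate[OF tg W \<open>\<one>\<^bsub>G\<^esub> \<in> W\<close>])
    show "generate G W \<subseteq> C"
      using group.generate_subset_right_stable[OF grp _ C(3) Wc] openin_subset[OF C(2)] V(3) top
      by (auto simp: W_def)
  qed
qed

lemma profinite_group_open_subgroup_in_nbhd:
  assumes "profinite_group G T" "openin T N" "\<one>\<^bsub>G\<^esub> \<in> N"
  obtains H where "subgroup H G" "openin T H" "H \<subseteq> N"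
proof -
  have tg: "topological_group G T" and "compact_space T"
    using assms(1) by (auto simp: profinite_group_def)
  then obtain C where "closedin T C" "openin T C" "\<one>\<^bsub>G\<^esub> \<in> C" "C \<subseteq> N"
    using locally_compact_totally_disconnected_clopen_nbhd[OF _ _ _ assms(2,3)] assms(1)
    by (auto simp: profinite_group_def compact_imp_locally_compact_space)
  moreover from this have "compactin T C"
    using \<open>compact_space T\<close> closedin_compact_space by blast
  ultimately obtain H where "subgroup H G" "openin T H" "H \<subseteq> C"
    using open_subgroup_in_compact_open[OF tg] by metis
  with \<open>C \<subseteq> N\<close> show thesis
    using that by blast
qed

lemma profinite_group_open_subgroup_translates:
  assumes G: "profinite_group G T"
    and U: "openin T U\<^sub>1" "g\<^sub>1 \<in> U\<^sub>1" "openin T U\<^sub>2" "g\<^sub>2 \<in> U\<^sub>2"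
  obtains H where "subgroup H G" "openin T H"
    "\<And>h. h \<in> H \<Longrightarrow> g\<^sub>1 \<otimes>\<^bsub>G\<^esub> h \<in> U\<^sub>1 \<and> g\<^sub>2 \<otimes>\<^bsub>G\<^esub> h \<in> U\<^sub>2"
proof -
  have tg: "topological_group G T"
    using G by (simp add: profinite_group_def)
  then have grp: "group G" and top: "topspace T = carrier G"
    by (auto simp: topological_group_def)
  have g: "g\<^sub>1 \<in> carrier G" "g\<^sub>2 \<in> carrier G"
    using U openin_subset top by blast+
  define N where "N = {h \<in> topspace T. g\<^sub>1 \<otimes>\<^bsub>G\<^esub> h \<in> U\<^sub>1} \<inter> {h \<in> topspace T. g\<^sub>2 \<otimes>\<^bsub>G\<^esub> h \<in> U\<^sub>2}"
  have "openin T N"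
    unfolding N_def
    using openin_continuous_map_preimage[OF continuous_map_group_lmult[OF tg g(1)] U(1)]
      openin_continuous_map_preimage[OF continuous_map_group_lmult[OF tg g(2)] U(3)]
    by blast
  moreover have "\<one>\<^bsub>G\<^esub> \<in> N"
    using U(2,4) g top grp by (simp add: N_def group.is_monoid)
  ultimately obtain H where "subgroup H G" "openin T H" "H \<subseteq> N"
    by (rule profinite_group_open_subgroup_in_nbhd[OF G])
  then show thesis
    using that by (auto simp: N_def)
qed

lemma profinite_locally_nilpotent_Engel_box:
  assumes "profinite_group G T" "locally_nilpotent G"
  obtains U\<^sub>1 g\<^sub>1 U\<^sub>2 g\<^sub>2 n where "openin T U\<^sub>1" "g\<^sub>1 \<in> U\<^sub>1" "openin T U\<^sub>2" "g\<^sub>2 \<in> U\<^sub>2"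
    "\<And>x y. x \<in> U\<^sub>1 \<Longrightarrow> y \<in> U\<^sub>2 \<Longrightarrow> iter_comm G x y (Suc n) = \<one>\<^bsub>G\<^esub>"
proof -
  have tg: "topological_group G T" and "compact_space T" "Hausdorff_space T"
    using assms(1) by (auto simp: profinite_group_def)
  then have grp: "group G" and top: "topspace T = carrier G"
    by (auto simp: topological_group_def)
  define E where "E n = {(x, y) \<in> carrier G \<times> carrier G. iter_comm G x y (Suc n) = \<one>\<^bsub>G\<^esub>}" for n
  have "locally_compact_space (prod_topology T T)" "Hausdorff_space (prod_topology T T)"
    using \<open>compact_space T\<close> \<open>Hausdorff_space T\<close>
    by (simp_all add: compact_imp_locally_compact_space compact_space_prod_topology
        Hausdorff_space_prod_topology)
  moreover have "topspace (prod_topology T T) \<noteq> {}"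
    using top grp monoid.one_closed[OF group.is_monoid[OF grp]] by auto
  moreover have "closedin (prod_topology T T) (E n)" for n
    unfolding E_def by (rule closedin_iter_comm_eq_one[OF tg \<open>Hausdorff_space T\<close>])
  moreover have "\<Union>(range E) = topspace (prod_topology T T)"
  proof (intro equalityI subsetI)
    fix z assume "z \<in> topspace (prod_topology T T)"
    then obtain x y where z: "z = (x, y)" and xy: "x \<in> carrier G" "y \<in> carrier G"
      by (auto simp: top)
    obtain n where "iter_comm G x y (Suc n) = \<one>\<^bsub>G\<^esub>"
      by (rule locally_nilpotent_Engel[OF grp assms(2) xy])
    then show "z \<in> \<Union>(range E)"
      using z xy by (auto simp: E_def)
  qed (auto simp: E_def top)
  ultimately obtain n where "prod_topology T T interior_of E n \<noteq> {}"
    by (rule Baire_countable_closed_cover)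
  then obtain g\<^sub>1 g\<^sub>2 where g: "(g\<^sub>1, g\<^sub>2) \<in> prod_topology T T interior_of E n"
    by auto
  from openin_interior_of[of "prod_topology T T" "E n", unfolded openin_prod_topology_alt,
      rule_format, OF g]
  obtain U\<^sub>1 U\<^sub>2 where U: "openin T U\<^sub>1" "openin T U\<^sub>2" "g\<^sub>1 \<in> U\<^sub>1" "g\<^sub>2 \<in> U\<^sub>2"
    and UE: "U\<^sub>1 \<times> U\<^sub>2 \<subseteq> prod_topology T T interior_of E n"
    by blast
  have "U\<^sub>1 \<times> U\<^sub>2 \<subseteq> E n"
    using UE interior_of_subset by (rule subset_trans)
  then show thesis
    using that[OF U(1,3,2,4)] by (auto simp: E_def)
qed

theorem lemma2p5:
  fixes G :: "('a, 'b) monoid_scheme" and T :: "'a topology"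
  assumes "profinite_group G T"
    and "locally_nilpotent G"
  shows "\<exists>n::nat. n > 0 \<and> (\<exists>g1 \<in> carrier G. \<exists>g2 \<in> carrier G. \<exists>H.
           subgroup H G \<and> openin T H \<and>
           (\<forall>h1 \<in> H. \<forall>h2 \<in> H.
              iter_comm G (g1 \<otimes>\<^bsub>G\<^esub> h1) (g2 \<otimes>\<^bsub>G\<^esub> h2) n = \<one>\<^bsub>G\<^esub>))"
proof -
  obtain U\<^sub>1 g\<^sub>1 U\<^sub>2 g\<^sub>2 n where U: "openin T U\<^sub>1" "g\<^sub>1 \<in> U\<^sub>1" "openin T U\<^sub>2" "g\<^sub>2 \<in> U\<^sub>2"
    and Engel: "\<And>x y. x \<in> U\<^sub>1 \<Longrightarrow> y \<in> U\<^sub>2 \<Longrightarrow> iter_comm G x y (Suc n) = \<one>\<^bsub>G\<^esub>"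
    using profinite_locally_nilpotent_Engel_box[OF assms] by blast
  obtain H where H: "subgroup H G" "openin T H"
    and HU: "\<And>h. h \<in> H \<Longrightarrow> g\<^sub>1 \<otimes>\<^bsub>G\<^esub> h \<in> U\<^sub>1 \<and> g\<^sub>2 \<otimes>\<^bsub>G\<^esub> h \<in> U\<^sub>2"
    using profinite_group_open_subgroup_translates[OF assms(1) U] by blast
  have "g\<^sub>1 \<in> carrier G" "g\<^sub>2 \<in> carrier G"
    using U openin_subset assms(1) by (auto simp: profinite_group_def topological_group_def)
  moreover have "\<forall>h\<^sub>1 \<in> H. \<forall>h\<^sub>2 \<in> H. iter_comm G (g\<^sub>1 \<otimes>\<^bsub>G\<^esub> h\<^sub>1) (g\<^sub>2 \<otimes>\<^bsub>G\<^esub> h\<^sub>2) (Suc n) = \<one>\<^bsub>G\<^esub>"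
    using HU Engel by blast
  ultimately show ?thesis
    using H zero_less_Suc by blast
qed

end
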